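(* Let $\mathcal{G}=(V,L)$ be a finite connected undirected graph with monitor set $M$ and non-monitor set $N=V\setminus M$, $\sigma=|N|$, and let the measurement paths be given by Controllable Simple-path Probing (CSP). For $v\in N$ let $\delta^*:=|C_{\mathcal{G}^*}(v,m')|$, $\delta_{\min}:=\min_{m\in M}|C_{\mathcal{G}_m}(v,m')|$ and $\pi_v:=\min(\delta_{\min},\delta^*-1)$. If $\pi_v\le\sigma-2$, then the maximum identifiability index of $v$ under CSP satisfies $\pi_v-1\le\Omega_{\mathrm{CSP}}(v)\le\pi_v$.
   Context: Failure model: a failure set is any $F\subseteq N$; a path fails iff it traverses a node of $F$. $P_F$ is the set of measurement paths traversing a node of $F$; $F_1,F_2$ distinguishable iff $P_{F_1}\ne P_{F_2}$. $S\subseteq N$ is $k$-identifiable if any two failure sets $F_1,F_2$ with $|F_1|,|F_2|\le k$ and $F_1\cap S\ne F_2\cap S$ are distinguishable (every set is trivially $0$-identifiable). $\Omega(v)$ is the maximum $k\in\{0,\dots,\sigma\}$ such that $\{v\}$ is $k$-identifiable. Under CSP, the measurement paths are all simple paths (no repeated nodes) in $\mathcal{G}$ between two distinct monitors. For $M'\subseteq M$, $\mathcal{N}(M')$ is the set of non-monitors adjacent to a monitor in $M'$. $\mathcal{G}^*$: delete all monitors from $\mathcal{G}$, add a virtual node $m'$, link $m'$ to every node of $\mathcal{N}(M)$. For $m\in M$, $\mathcal{G}_m$: delete all monitors from $\mathcal{G}$, add a virtual node $m'$, link $m'$ to every node of $\mathcal{N}(M\setminus\{m\})$. For nodes $s,t$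 of a graph $\mathcal{H}$, $C_{\mathcal{H}}(s,t)$ is a minimum-cardinality set of nodes (other than $s,t$) whose deletion destroys all $s$–$t$ paths; if $s,t$ are adjacent, $C_{\mathcal{H}}(s,t):=V(\mathcal{H})\setminus\{t\}$. *)

theory Defs
  imports Main
begin

definition ugraph :: "'a set \<Rightarrow> ('a \<Rightarrow> 'a \<Rightarrow> bool) \<Rightarrow> bool" where
  "ugraph V E \<longleftrightarrow> finite V \<and> (\<forall>x y. E x y \<longrightarrow> x \<in> V \<and> y \<in> V)
     \<and> (\<forall>x y. E x y \<longrightarrow> E y x) \<and> (\<forall>x. \<not> E x x)"

definition restr :: "('a \<Rightarrow> 'a \<Rightarrow> bool) \<Rightarrow> 'a set \<Rightarrow> 'a \<Rightarrow> 'a \<Rightarrow> bool" where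
  "restr E W = (\<lambda>x y. E x y \<and> x \<in> W \<and> y \<in> W)"

definition connected_graph :: "'a set \<Rightarrow> ('a \<Rightarrow> 'a \<Rightarrow> bool) \<Rightarrow> bool" where
  "connected_graph V E \<longleftrightarrow> (\<forall>x\<in>V. \<forall>y\<in>V. (restr E V)\<^sup>*\<^sup>* x y)"

definition simple_path :: "'a set \<Rightarrow> ('a \<Rightarrow> 'a \<Rightarrow> bool) \<Rightarrow> 'a list \<Rightarrow> bool" where
  "simple_path V E p \<longleftrightarrow> p \<noteq> [] \<and> distinct p \<and> set p \<subseteq> V \<and> successively E p"

definition csp_paths :: "'a set \<Rightarrow> ('a \<Rightarrow> 'a \<Rightarrow> bool) \<Rightarrow> 'a set \<Rightarrow> 'a list set" where
  "csp_paths V E M = {p. simple_path V E p \<and> hd p \<in> M \<and> last p \<in> M \<and> hd p \<noteq> last p}"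

definition paths_through :: "'a list set \<Rightarrow> 'a set \<Rightarrow> 'a list set" where
  "paths_through P F = {p \<in> P. set p \<inter> F \<noteq> {}}"

definition k_identifiable ::
  "'a set \<Rightarrow> ('a \<Rightarrow> 'a \<Rightarrow> bool) \<Rightarrow> 'a set \<Rightarrow> 'a set \<Rightarrow> nat \<Rightarrow> bool" where
  "k_identifiable V E M S k \<longleftrightarrow>
     (\<forall>F1 F2. F1 \<subseteq> V - M \<and> F2 \<subseteq> V - M \<and> card F1 \<le> k \<and> card F2 \<le> k
        \<and> F1 \<inter> S \<noteq> F2 \<inter> S
        \<longrightarrow> paths_through (csp_paths V E M) F1 \<noteq> paths_through (csp_paths V E M) F2)"

definition Omega_csp :: "'a set \<Rightarrow> ('a \<Rightarrow> 'a \<Rightarrow> bool) \<Rightarrow> 'a set \<Rightarrow> 'a \<Rightarrow> nat" where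
  "Omega_csp V E M v = Max {k. k \<le> card (V - M) \<and> k_identifiable V E M {v} k}"

definition nbr_mon :: "'a set \<Rightarrow> ('a \<Rightarrow> 'a \<Rightarrow> bool) \<Rightarrow> 'a set \<Rightarrow> 'a set \<Rightarrow> 'a set" where
  "nbr_mon V E M M' = {x \<in> V - M. \<exists>m\<in>M'. E x m}"

text \<open>Auxiliary graph: monitors deleted, virtual node None (= m') linked to the nodes of A.
  Original nodes x are represented by Some x.\<close>
definition aux_V :: "'a set \<Rightarrow> 'a set \<Rightarrow> 'a option set" where
  "aux_V V M = Some ` (V - M) \<union> {None}"

definition aux_E :: "'a set \<Rightarrow> ('a \<Rightarrow> 'a \<Rightarrow> bool) \<Rightarrow> 'a set \<Rightarrow> 'a set
    \<Rightarrow> 'a option \<Rightarrow> 'a option \<Rightarrow> bool" where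
  "aux_E V E M A x y = (case (x, y) of
      (Some a, Some b) \<Rightarrow> E a b \<and> a \<in> V - M \<and> b \<in> V - M
    | (None, Some b) \<Rightarrow> b \<in> A
    | (Some a, None) \<Rightarrow> a \<in> A
    | (None, None) \<Rightarrow> False)"

definition Gstar_E :: "'a set \<Rightarrow> ('a \<Rightarrow> 'a \<Rightarrow> bool) \<Rightarrow> 'a set \<Rightarrow> 'a option \<Rightarrow> 'a option \<Rightarrow> bool" where
  "Gstar_E V E M = aux_E V E M (nbr_mon V E M M)"

definition Gm_E :: "'a set \<Rightarrow> ('a \<Rightarrow> 'a \<Rightarrow> bool) \<Rightarrow> 'a set \<Rightarrow> 'a \<Rightarrow> 'a option \<Rightarrow> 'a option \<Rightarrow> bool" where
  "Gm_E V E M m = aux_E V E M (nbr_mon V E M (M - {m}))"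

definition separates :: "'b set \<Rightarrow> ('b \<Rightarrow> 'b \<Rightarrow> bool) \<Rightarrow> 'b \<Rightarrow> 'b \<Rightarrow> 'b set \<Rightarrow> bool" where
  "separates W R s t X \<longleftrightarrow> X \<subseteq> W - {s, t} \<and> \<not> (restr R (W - X))\<^sup>*\<^sup>* s t"

definition cut_card :: "'b set \<Rightarrow> ('b \<Rightarrow> 'b \<Rightarrow> bool) \<Rightarrow> 'b \<Rightarrow> 'b \<Rightarrow> nat" where
  "cut_card W R s t = (if R s t then card (W - {t}) else Min (card ` {X. separates W R s t X}))"

end

theory Submission
  imports Defs
begin

(* A failure set F with v \<notin> F is told apart from every failure set containing v as soon as
   some probing path runs through v and avoids F, i.e. as soon as v has two walks to two
   different monitors that avoid F and meet only in v. Letting the non-monitors outside F lead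
   to their neighbours and every monitor lead to a common sink, these are two internally
   disjoint walks from v to the sink, and by the two-path case of Menger's theorem they exist
   unless a single node separates v from the sink. Deleting a monitor m is harmless while
   |F| < |C_{G_m}(v,m')|, deleting a non-monitor w while |F \<union> {w}| < |C_{G*}(v,m')|; hence
   Omega(v) \<ge> pi_v - 1. Conversely, for a minimum separator X of G_m every path through v has a
   half avoiding m, which must meet X, so X \<union> {v} and X are indistinguishable; for a minimum
   separator X of G* both halves meet X, in different nodes, so the same happens for
   (X - {x}) \<union> {v} and X - {x}. Hence Omega(v) \<le> pi_v. *)

definition simple_walk :: "('b \<Rightarrow> 'b \<Rightarrow> bool) \<Rightarrow> 'b list \<Rightarrow> 'b \<Rightarrow> 'b \<Rightarrow> bool" where
  "simple_walk R p x y \<longleftrightarrow> p \<noteq> [] \<and> hd p = x \<and> last p = y \<and> distinct p \<and> successively R p"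

lemma simple_walk_singleton [simp]: "simple_walk R [x] x x"
  by (simp add: simple_walk_def)

lemma simple_walk_hd_last_in_set:
  "simple_walk R p x y \<Longrightarrow> x \<in> set p \<and> y \<in> set p"
  by (metis hd_in_set last_in_set simple_walk_def)

lemma simple_walk_length_ge_2: "simple_walk R p x y \<Longrightarrow> x \<noteq> y \<Longrightarrow> 2 \<le> length p"
  by (cases p; cases "tl p") (auto simp: simple_walk_def)

lemma simple_walk_append:
  assumes "simple_walk R p x y" "simple_walk R q y z" "set p \<inter> set q = {y}"
  shows "simple_walk R (p @ tl q) x z" "set (p @ tl q) = set p \<union> set q"
proof -
  obtain q' where q: "q = y # q'" using assms(2) by (cases q) (auto simp: simple_walk_def)
  have "y \<notin> set q'" using assms(2) q by (simp add: simple_walk_def)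
  then show "set (p @ tl q) = set p \<union> set q"
    using assms(1) q by (auto dest: simple_walk_hd_last_in_set)
  show "simple_walk R (p @ tl q) x z"
    using assms q \<open>y \<notin> set q'\<close>
    by (cases q') (auto simp: simple_walk_def successively_append_iff)
qed

lemma simple_walk_split:
  assumes "simple_walk R p x z" "y \<in> set p"
  obtains p1 p2 where "simple_walk R p1 x y" "simple_walk R p2 y z" "set p1 \<inter> set p2 = {y}"
    "set p1 \<subseteq> set p" "set p2 \<subseteq> set p" "length p1 + length p2 = Suc (length p)"
proof -
  obtain us ws where p: "p = us @ y # ws" using assms(2) by (meson split_list)
  have "simple_walk R (us @ [y]) x y" "simple_walk R (y # ws) y z"
    using assms(1) p by (auto simp: simple_walk_def successively_append_iff hd_append)
  moreover have "set (us @ [y]) \<inter> set (y # ws) = {y}"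
    using assms(1) p by (auto simp: simple_walk_def)
  ultimately show ?thesis using that[of "us @ [y]" "y # ws"] p by auto
qed

lemma simple_walk_snoc:
  assumes "simple_walk R p x y" "R y z" "z \<notin> set p"
  shows "simple_walk R (p @ [z]) x z"
  using assms by (auto simp: simple_walk_def successively_append_iff)

lemma avoiding_walk_extend:
  assumes xA: "x \<in> A" and "A \<inter> B = {}" and p: "simple_walk R p x c"
    and tl_p: "set (tl p) \<inter> (A \<union> B) = {}" and "R c d" "d \<notin> A"
  shows "(\<exists>x y p. x \<in> A \<and> y \<in> B \<and> simple_walk R p x y \<and> set p \<inter> (A \<union> B) = {x, y})
     \<or> (d \<notin> B \<and> (\<exists>x p. x \<in> A \<and> simple_walk R p x d \<and> set (tl p) \<inter> (A \<union> B) = {}))"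
proof -
  have set_p: "set p = insert x (set (tl p))" using p by (cases p) (auto simp: simple_walk_def)
  show ?thesis
  proof (cases "d \<in> set p")
    case True
    then obtain p1 where p1: "simple_walk R p1 x d" "set p1 \<subseteq> set p"
      using p by (auto elim: simple_walk_split)
    have "set (tl p1) \<subseteq> set (tl p)" using p1 set_p by (cases p1) (auto simp: simple_walk_def)
    moreover have "d \<notin> B" using True set_p \<open>d \<notin> A\<close> xA tl_p by auto
    ultimately show ?thesis using xA p1 tl_p by blast
  next
    case False
    have walk: "simple_walk R (p @ [d]) x d" using simple_walk_snoc[OF p \<open>R c d\<close> False] .
    show ?thesis
    proof (cases "d \<in> B")
      case True
      then have "set (p @ [d]) \<inter> (A \<union> B) = {x, d}" using set_p tl_p xA \<open>A \<inter> B = {}\<close> by auto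
      then show ?thesis using xA True walk by blast
    next
      case False
      have "set (tl (p @ [d])) = insert d (set (tl p))" using p by (cases p) (auto simp: simple_walk_def)
      then have "set (tl (p @ [d])) \<inter> (A \<union> B) = {}" using tl_p \<open>d \<notin> A\<close> False by auto
      then show ?thesis using xA walk False by blast
    qed
  qed
qed

lemma rtranclp_imp_crossing_walk_or_avoiding:
  assumes "R\<^sup>*\<^sup>* a b" "a \<in> A" "A \<inter> B = {}"
  shows "(\<exists>x y p. x \<in> A \<and> y \<in> B \<and> simple_walk R p x y \<and> set p \<inter> (A \<union> B) = {x, y})
     \<or> (b \<notin> B \<and> (\<exists>x p. x \<in> A \<and> simple_walk R p x b \<and> set (tl p) \<inter> (A \<union> B) = {}))"
  using assms(1)
proof (induction rule: rtranclp_induct)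
  case base
  then show ?case using assms(2,3) by (auto intro!: exI[of _ "[a]"])
next
  case (step c d)
  show ?case
  proof (cases "d \<in> A")
    case True
    then show ?thesis using assms(3) by (auto intro!: exI[of _ "[d]"])
  next
    case False
    from step.IH show ?thesis
    proof (elim disjE exE conjE)
      fix x p assume walk: "x \<in> A" "simple_walk R p x c" "set (tl p) \<inter> (A \<union> B) = {}"
      show ?thesis using avoiding_walk_extend[OF walk(1) assms(3) walk(2,3) step.hyps(2) False] .
    qed blast
  qed
qed

lemma rtranclp_imp_crossing_walk:
  assumes "R\<^sup>*\<^sup>* a b" "a \<in> A" "b \<in> B" "A \<inter> B = {}"
  shows "\<exists>x y p. x \<in> A \<and> y \<in> B \<and> simple_walk R p x y \<and> set p \<inter> (A \<union> B) = {x, y}"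
  using rtranclp_imp_crossing_walk_or_avoiding[OF assms(1,2,4)] assms(3) by blast

lemma rtranclp_imp_simple_walk:
  assumes "R\<^sup>*\<^sup>* a b"
  shows "\<exists>p. simple_walk R p a b"
proof (cases "a = b")
  case True
  then show ?thesis by (auto intro!: exI[of _ "[a]"])
next
  case False
  then show ?thesis using rtranclp_imp_crossing_walk[OF assms, of "{a}" "{b}"] by auto
qed

lemma successively_restr_subset:
  "successively (restr R W) p \<Longrightarrow> length p \<ge> 2 \<Longrightarrow> set p \<subseteq> W"
proof (induction p)
  case (Cons x xs)
  then show ?case by (cases xs; cases "tl xs") (auto simp: restr_def)
qed auto

(* Invariant of the augmenting-walk proof of the two-path Menger theorem: a walk avoiding q
   from the first two walks to the third one moves q strictly closer to t along the third. *)
definition fan_state ::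
  "('b \<Rightarrow> 'b \<Rightarrow> bool) \<Rightarrow> 'b \<Rightarrow> 'b \<Rightarrow> 'b list \<Rightarrow> 'b list \<Rightarrow> 'b list \<Rightarrow> 'b \<Rightarrow> bool" where
  "fan_state R s t \<alpha> \<gamma> \<beta> q \<longleftrightarrow> s \<noteq> q \<and>
     simple_walk R \<alpha> s q \<and> simple_walk R \<gamma> s q \<and> simple_walk R \<beta> q t \<and>
     set \<alpha> \<inter> set \<gamma> = {s, q} \<and> set \<alpha> \<inter> set \<beta> = {q} \<and> set \<gamma> \<inter> set \<beta> = {q}"

lemma fan_state_swap: "fan_state R s t \<alpha> \<gamma> \<beta> q \<Longrightarrow> fan_state R s t \<gamma> \<alpha> \<beta> q"
  unfolding fan_state_def by blast

lemma fan_state_augment: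
  assumes inv: "fan_state R s t \<alpha> \<gamma> \<beta> q"
    and x: "x \<in> set \<alpha>" "x \<noteq> q" and y: "y \<in> set \<beta>" "y \<noteq> q"
    and \<sigma>: "simple_walk R \<sigma> x y" "set \<sigma> \<inter> (set \<alpha> \<union> set \<gamma> \<union> set \<beta>) = {x, y}"
  shows "\<exists>\<alpha>' \<gamma>' \<beta>'. fan_state R s t \<alpha>' \<gamma>' \<beta>' y \<and> length \<beta>' < length \<beta>"
proof -
  have \<alpha>: "simple_walk R \<alpha> s q" and \<gamma>: "simple_walk R \<gamma> s q" and \<beta>: "simple_walk R \<beta> q t"
    and \<alpha>\<gamma>: "set \<alpha> \<inter> set \<gamma> = {s, q}" and \<alpha>\<beta>: "set \<alpha> \<inter> set \<beta> = {q}"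
    and \<gamma>\<beta>: "set \<gamma> \<inter> set \<beta> = {q}"
    using inv by (auto simp: fan_state_def)
  obtain \<alpha>1 \<alpha>2 where \<alpha>1: "simple_walk R \<alpha>1 s x" "set \<alpha>1 \<subseteq> set \<alpha>"
    and \<alpha>2: "simple_walk R \<alpha>2 x q" "set \<alpha>1 \<inter> set \<alpha>2 = {x}"
    using simple_walk_split[OF \<alpha> x(1)] by metis
  obtain \<beta>1 \<beta>2 where \<beta>1: "simple_walk R \<beta>1 q y" "set \<beta>1 \<subseteq> set \<beta>"
    and \<beta>2: "simple_walk R \<beta>2 y t" "set \<beta>2 \<subseteq> set \<beta>" "set \<beta>1 \<inter> set \<beta>2 = {y}"
    and len: "length \<beta>1 + length \<beta>2 = Suc (length \<beta>)"
    using simple_walk_split[OF \<beta> y(1)] by metis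
  have q_\<alpha>1: "q \<notin> set \<alpha>1" using \<alpha>2 x(2) simple_walk_hd_last_in_set[OF \<alpha>2(1)] by auto
  have q_\<beta>2: "q \<notin> set \<beta>2" using \<beta>2(3) y(2) simple_walk_hd_last_in_set[OF \<beta>1(1)] by auto
  have ends: "s \<in> set \<alpha>1" "x \<in> set \<alpha>1" "q \<in> set \<gamma>" "s \<in> set \<gamma>" "q \<in> set \<beta>1" "y \<in> set \<beta>1"
    "x \<in> set \<sigma>" "y \<in> set \<sigma>"
    using \<alpha>1(1) \<gamma> \<beta>1(1) \<sigma>(1) by (auto dest: simple_walk_hd_last_in_set)
  have "set \<alpha>1 \<inter> set \<sigma> = {x}" using \<sigma>(2) \<alpha>1(2) \<alpha>\<beta> y ends by blast
  note \<alpha>' = simple_walk_append[OF \<alpha>1(1) \<sigma>(1) this]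
  have "set \<gamma> \<inter> set \<beta>1 = {q}" using \<gamma>\<beta> \<beta>1(2) ends by blast
  note \<gamma>' = simple_walk_append[OF \<gamma> \<beta>1(1) this]
  have "y \<notin> set \<gamma>" "x \<notin> set \<beta>" using \<gamma>\<beta> \<alpha>\<beta> x y by blast+
  then have \<sigma>_\<gamma>: "set \<sigma> \<inter> set \<gamma> \<subseteq> {s}" and \<sigma>_\<beta>: "set \<sigma> \<inter> set \<beta> = {y}"
    using \<sigma>(2) \<alpha>\<gamma> x y ends by auto
  have \<alpha>1_\<gamma>: "set \<alpha>1 \<inter> set \<gamma> \<subseteq> {s}" and \<alpha>1_\<beta>: "set \<alpha>1 \<inter> set \<beta> = {}"
    using \<alpha>\<gamma> \<alpha>\<beta> \<alpha>1(2) q_\<alpha>1 by auto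
  have "y \<in> set \<beta>2" using \<beta>2(1) by (auto dest: simple_walk_hd_last_in_set)
  then have "(set \<alpha>1 \<union> set \<sigma>) \<inter> (set \<gamma> \<union> set \<beta>1) = {s, y}"
    and "(set \<alpha>1 \<union> set \<sigma>) \<inter> set \<beta>2 = {y}" and "(set \<gamma> \<union> set \<beta>1) \<inter> set \<beta>2 = {y}"
    using \<alpha>1_\<gamma> \<sigma>_\<gamma> \<alpha>1_\<beta> \<sigma>_\<beta> \<gamma>\<beta> \<beta>1(2) \<beta>2(2,3) q_\<beta>2 ends by auto
  moreover have "s \<noteq> y" using \<alpha>\<beta> y ends \<alpha>1(2) by blast
  ultimately have "fan_state R s t (\<alpha>1 @ tl \<sigma>) (\<gamma> @ tl \<beta>1) \<beta>2 y"
    unfolding fan_state_def \<alpha>'(2) \<gamma>'(2) using \<alpha>'(1) \<gamma>'(1) \<beta>2(1) by blast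
  moreover have "length \<beta>2 < length \<beta>"
    using len simple_walk_length_ge_2[OF \<beta>1(1) y(2)[symmetric]] by simp
  ultimately show ?thesis by blast
qed

lemma fan_state_step:
  assumes inv: "fan_state R s t \<alpha> \<gamma> \<beta> q" and "q \<noteq> t"
    and reach: "(restr R (- {q}))\<^sup>*\<^sup>* s t"
  shows "\<exists>\<alpha>' \<gamma>' \<beta>' q'. fan_state R s t \<alpha>' \<gamma>' \<beta>' q' \<and> length \<beta>' < length \<beta>"
proof -
  have "q \<noteq> s" and \<beta>: "simple_walk R \<beta> q t"
    and "set \<alpha> \<inter> set \<beta> = {q}" "set \<gamma> \<inter> set \<beta> = {q}"
    using inv by (auto simp: fan_state_def)
  define A where "A = (set \<alpha> \<union> set \<gamma>) - {q}"
  define B where "B = set \<beta> - {q}"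
  have AB: "A \<inter> B = {}" unfolding A_def B_def
    using \<open>set \<alpha> \<inter> set \<beta> = {q}\<close> \<open>set \<gamma> \<inter> set \<beta> = {q}\<close> by blast
  have s_A: "s \<in> A" and t_B: "t \<in> B" unfolding A_def B_def using inv \<open>q \<noteq> s\<close> \<open>q \<noteq> t\<close>
    by (auto simp: fan_state_def dest: simple_walk_hd_last_in_set)
  obtain x y \<sigma> where x: "x \<in> A" and y: "y \<in> B"
    and \<sigma>: "simple_walk (restr R (- {q})) \<sigma> x y" and \<sigma>_AB: "set \<sigma> \<inter> (A \<union> B) = {x, y}"
    using rtranclp_imp_crossing_walk[OF reach s_A t_B AB] by blast
  have "x \<noteq> y" using x y AB by blast
  then have "set \<sigma> \<subseteq> - {q}"
    using \<sigma> successively_restr_subset simple_walk_length_ge_2 by (metis simple_walk_def)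
  moreover have "q \<in> set \<beta>" using \<beta> by (auto dest: simple_walk_hd_last_in_set)
  ultimately have \<sigma>_meets: "set \<sigma> \<inter> (set \<alpha> \<union> set \<gamma> \<union> set \<beta>) = {x, y}"
    using \<sigma>_AB unfolding A_def B_def by blast
  have \<sigma>_R: "simple_walk R \<sigma> x y"
    using \<sigma> by (auto simp: simple_walk_def restr_def elim: successively_mono)
  have "x \<noteq> q" "y \<in> set \<beta>" "y \<noteq> q" using x y unfolding A_def B_def by blast+
  moreover have "x \<in> set \<alpha> \<or> x \<in> set \<gamma>" using x unfolding A_def by blast
  ultimately show ?thesis
  proof (elim disjE)
    assume "x \<in> set \<alpha>"
    then show ?thesis using fan_state_augment[OF inv _ \<open>x \<noteq> q\<close> \<open>y \<in> set \<beta>\<close> \<open>y \<noteq> q\<close> \<sigma>_R \<sigma>_meets]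
      by blast
  next
    assume "x \<in> set \<gamma>"
    moreover have "set \<sigma> \<inter> (set \<gamma> \<union> set \<alpha> \<union> set \<beta>) = {x, y}" using \<sigma>_meets by blast
    ultimately show ?thesis
      using fan_state_augment[OF fan_state_swap[OF inv] _ \<open>x \<noteq> q\<close> \<open>y \<in> set \<beta>\<close> \<open>y \<noteq> q\<close> \<sigma>_R]
      by blast
  qed
qed

lemma fan_state_imp_two_walks:
  assumes "fan_state R s t \<alpha> \<gamma> \<beta> q"
    and cut_vertex_free: "\<And>z. z \<noteq> s \<Longrightarrow> z \<noteq> t \<Longrightarrow> (restr R (- {z}))\<^sup>*\<^sup>* s t"
  shows "\<exists>\<alpha> \<gamma>. simple_walk R \<alpha> s t \<and> simple_walk R \<gamma> s t \<and> set \<alpha> \<inter> set \<gamma> = {s, t}"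
  using assms(1)
proof (induction "length \<beta>" arbitrary: \<alpha> \<gamma> \<beta> q rule: less_induct)
  case less
  show ?case
  proof (cases "q = t")
    case True
    then show ?thesis using less.prems unfolding fan_state_def by blast
  next
    case False
    moreover have "q \<noteq> s" using less.prems by (auto simp: fan_state_def)
    ultimately obtain \<alpha>' \<gamma>' \<beta>' q' where "fan_state R s t \<alpha>' \<gamma>' \<beta>' q'" "length \<beta>' < length \<beta>"
      using fan_state_step[OF less.prems] cut_vertex_free by blast
    then show ?thesis using less.hyps by blast
  qed
qed

lemma two_internally_disjoint_walks:
  assumes "s \<noteq> t" "R\<^sup>*\<^sup>* s t"
    and cut_vertex_free: "\<And>z. z \<noteq> s \<Longrightarrow> z \<noteq> t \<Longrightarrow> (restr R (- {z}))\<^sup>*\<^sup>* s t"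
  shows "\<exists>\<alpha> \<gamma>. simple_walk R \<alpha> s t \<and> simple_walk R \<gamma> s t \<and> set \<alpha> \<inter> set \<gamma> = {s, t}"
proof -
  obtain p where p: "simple_walk R p s t" using rtranclp_imp_simple_walk[OF assms(2)] by blast
  then obtain q rest where p_eq: "p = s # q # rest"
    using assms(1) by (cases p; cases "tl p") (auto simp: simple_walk_def)
  then have "s \<noteq> q" "simple_walk R [s, q] s q" "simple_walk R (q # rest) q t"
    using p by (auto simp: simple_walk_def)
  then have "fan_state R s t [s, q] [s, q] (q # rest) q"
    using p p_eq by (auto simp: fan_state_def simple_walk_def)
  from fan_state_imp_two_walks[OF this cut_vertex_free] show ?thesis .
qed

lemma ugraph_finite: "ugraph V E \<Longrightarrow> finite V"
  by (simp add: ugraph_def)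

lemma ugraph_successively_rev:
  assumes "ugraph V E" "successively E p"
  shows "successively E (rev p)"
proof -
  have "(\<lambda>x y. E y x) = E" using assms(1) unfolding ugraph_def by blast
  then show ?thesis using assms(2) by (metis successively_rev)
qed

lemma simple_walk_rev:
  assumes "ugraph V E" "simple_walk E p x y"
  shows "simple_walk E (rev p) y x"
  using assms ugraph_successively_rev[OF assms(1)]
  by (simp add: simple_walk_def hd_rev last_rev)

lemma separates_finite_cards:
  "finite W \<Longrightarrow> finite (card ` {X. separates W R s t X})"
  by (rule finite_imageI, rule finite_subset[of _ "Pow W"]) (auto simp: separates_def)

lemma rtranclp_restr_if_card_less_cut_card:
  assumes "finite W" "\<not> R s t" "X \<subseteq> W - {s, t}" "card X < cut_card W R s t"
  shows "(restr R (W - X))\<^sup>*\<^sup>* s t"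
proof (rule ccontr)
  assume "\<not> ?thesis"
  then have "separates W R s t X" using assms(3) by (simp add: separates_def)
  then have "cut_card W R s t \<le> card X"
    unfolding cut_card_def using assms(2) separates_finite_cards[OF assms(1)] by (simp add: Min_le)
  then show False using assms(4) by simp
qed

lemma restr_pair_stays:
  assumes "(restr R {s, t})\<^sup>*\<^sup>* s c" "\<not> R s t"
  shows "c = s"
  using assms(1) by (induction rule: rtranclp_induct) (use assms(2) in \<open>auto simp: restr_def\<close>)

lemma cut_card_attained:
  assumes "finite W" "s \<in> W" "t \<in> W" "s \<noteq> t" "\<not> R s t"
  obtains X where "separates W R s t X" "card X = cut_card W R s t"
proof -
  have "W - (W - {s, t}) = {s, t}" using assms(2,3) by auto
  then have "separates W R s t (W - {s, t})"
    using restr_pair_stays[of R s t t] assms(4,5) by (auto simp: separates_def)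
  then have "card ` {X. separates W R s t X} \<noteq> {}" by blast
  then have "cut_card W R s t \<in> card ` {X. separates W R s t X}"
    unfolding cut_card_def using assms(5) Min_in[OF separates_finite_cards[OF assms(1)]] by simp
  then show ?thesis using that by (auto simp del: mem_Collect_eq)
qed

lemma finite_aux_V: "finite V \<Longrightarrow> finite (aux_V V M)"
  by (simp add: aux_V_def)

lemma card_aux_V_minus_sink: "card (aux_V V M - {None}) = card (V - M)"
proof -
  have "aux_V V M - {None} = Some ` (V - M)" by (auto simp: aux_V_def)
  then show ?thesis by (simp add: card_image)
qed

lemma separates_aux_V_image_Some:
  assumes "separates (aux_V V M) R (Some v) None X"
  obtains Y where "X = Some ` Y" "Y \<subseteq> V - M - {v}" "card Y = card X"
proof -
  have X: "X \<subseteq> aux_V V M - {Some v, None}" using assms by (simp add: separates_def)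
  then have "X = Some ` the ` X" by (force simp: image_image aux_V_def)
  moreover have "the ` X \<subseteq> V - M - {v}" using X by (auto simp: aux_V_def)
  ultimately show ?thesis using that by (metis card_image inj_Some inj_on_subset subset_UNIV)
qed

lemma walk_to_monitor_imp_aux_reach:
  assumes "successively E (x # xs)" "set (x # xs) \<subseteq> V" "x \<notin> M" "last (x # xs) \<in> M"
    "set (x # xs) \<inter> Y = {}" "\<forall>y\<in>set xs. y \<in> M \<longrightarrow> y \<in> M'"
  shows "(restr (aux_E V E M (nbr_mon V E M M')) (aux_V V M - Some ` Y))\<^sup>*\<^sup>* (Some x) None"
  using assms
proof (induction xs arbitrary: x)
  case (Cons y ys)
  let ?R = "restr (aux_E V E M (nbr_mon V E M M')) (aux_V V M - Some ` Y)"
  have xy: "E x y" "x \<in> V" "y \<in> V" "x \<notin> Y" "y \<notin> Y" using Cons.prems by auto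
  show ?case
  proof (cases "y \<in> M")
    case True
    then have "?R (Some x) None" using xy Cons.prems(3,6)
      by (auto simp: restr_def aux_E_def aux_V_def nbr_mon_def)
    then show ?thesis by simp
  next
    case False
    have "?R (Some x) (Some y)" using xy Cons.prems(3) False
      by (auto simp: restr_def aux_E_def aux_V_def)
    moreover have "?R\<^sup>*\<^sup>* (Some y) None" using Cons.IH[of y] Cons.prems False by auto
    ultimately show ?thesis by (meson converse_rtranclp_into_rtranclp)
  qed
qed simp

lemma csp_path_split_at:
  assumes ug: "ugraph V E" and p: "p \<in> csp_paths V E M" and v: "v \<in> set p" "v \<notin> M"
  obtains p1 p2 where "p = p1 @ v # p2" "successively E (v # rev p1)" "successively E (v # p2)"
    "last (v # rev p1) \<in> M" "last (v # p2) \<in> M"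
proof -
  obtain p1 p2 where p_eq: "p = p1 @ v # p2" using v(1) by (meson split_list)
  have walk: "successively E p" and ends: "hd p \<in> M" "last p \<in> M"
    using p by (auto simp: csp_paths_def simple_path_def)
  have "p1 \<noteq> []" "p2 \<noteq> []" using ends p_eq v(2) by (cases p1; cases p2; auto)+
  then have "last (v # rev p1) = hd p" "last (v # p2) = last p"
    using p_eq by (simp_all add: last_rev)
  moreover have "successively E (p1 @ [v])" "successively E (v # p2)"
    using walk p_eq by (auto simp: successively_append_iff)
  then have "successively E (v # rev p1)" "successively E (v # p2)"
    using ugraph_successively_rev[OF ug, of "p1 @ [v]"] by simp_all
  ultimately show ?thesis using that p_eq ends by metis
qed

lemma paths_through_insert_eq:
  assumes "\<forall>p\<in>P. v \<in> set p \<longrightarrow> set p \<inter> F \<noteq> {}"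
  shows "paths_through P (insert v F) = paths_through P F"
  using assms by (auto simp: paths_through_def)

lemma not_k_identifiable_if_indistinguishable:
  assumes "finite V" "F \<subseteq> V - M" "v \<in> V - M" "v \<notin> F" "Suc (card F) \<le> k"
    and "paths_through (csp_paths V E M) (insert v F) = paths_through (csp_paths V E M) F"
  shows "\<not> k_identifiable V E M {v} k"
proof -
  have "finite F" using assms(1,2) finite_subset by blast
  then have "card (insert v F) \<le> k" "card F \<le> k" using assms(4,5) by simp_all
  moreover have "insert v F \<subseteq> V - M" "insert v F \<inter> {v} \<noteq> F \<inter> {v}" using assms(2-4) by auto
  moreover note k_identifiable_def[of V E M "{v}" k, THEN iffD1, rule_format, of "insert v F" F]
  ultimately show ?thesis using assms(2,6) by blast
qed

lemma monitor_walk_meets_separator: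
  assumes "\<not> (restr (aux_E V E M (nbr_mon V E M M')) (aux_V V M - Some ` Y))\<^sup>*\<^sup>* (Some v) None"
    and "successively E (v # ws)" "set (v # ws) \<subseteq> V" "v \<notin> M" "last (v # ws) \<in> M"
    and "set ws \<inter> M \<subseteq> M'" "v \<notin> Y"
  shows "set ws \<inter> Y \<noteq> {}"
proof
  assume "set ws \<inter> Y = {}"
  then have "set (v # ws) \<inter> Y = {}" using assms(7) by simp
  moreover have "\<forall>y\<in>set ws. y \<in> M \<longrightarrow> y \<in> M'" using assms(6) by blast
  ultimately show False using walk_to_monitor_imp_aux_reach[OF assms(2-5)] assms(1) by blast
qed

lemma csp_path_halves_meet_separator:
  assumes ug: "ugraph V E" and v: "v \<in> V - M" "v \<notin> Y"
    and no_exit: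
      "\<not> (restr (aux_E V E M (nbr_mon V E M M')) (aux_V V M - Some ` Y))\<^sup>*\<^sup>* (Some v) None"
    and p: "p \<in> csp_paths V E M" "v \<in> set p"
  obtains p1 p2 where "p = p1 @ v # p2"
    "set p1 \<inter> M \<subseteq> M' \<Longrightarrow> set p1 \<inter> Y \<noteq> {}" "set p2 \<inter> M \<subseteq> M' \<Longrightarrow> set p2 \<inter> Y \<noteq> {}"
proof -
  obtain p1 p2 where p_eq: "p = p1 @ v # p2" and walks: "successively E (v # rev p1)"
    "successively E (v # p2)" "last (v # rev p1) \<in> M" "last (v # p2) \<in> M"
    using csp_path_split_at[OF ug p] v by blast
  have "set p \<subseteq> V" using p(1) by (auto simp: csp_paths_def simple_path_def)
  then have in_V: "set (v # rev p1) \<subseteq> V" "set (v # p2) \<subseteq> V" using p_eq by auto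
  have "set (rev p1) \<inter> Y \<noteq> {}" if "set p1 \<inter> M \<subseteq> M'"
    using monitor_walk_meets_separator[OF no_exit walks(1) in_V(1) _ walks(3) _ v(2)] that v(1)
    by auto
  moreover have "set p2 \<inter> Y \<noteq> {}" if "set p2 \<inter> M \<subseteq> M'"
    using monitor_walk_meets_separator[OF no_exit walks(2) in_V(2) _ walks(4) _ v(2)] that v(1)
    by auto
  ultimately show ?thesis using that p_eq by simp
qed

lemma not_k_identifiable_beyond_Gm_separator:
  assumes ug: "ugraph V E" and v: "v \<in> V - M" and m: "m \<in> M"
    and sep: "separates (aux_V V M) (Gm_E V E M m) (Some v) None X"
  shows "\<not> k_identifiable V E M {v} (Suc (card X))"
proof -
  obtain Y where Y: "X = Some ` Y" "Y \<subseteq> V - M - {v}" "card Y = card X"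
    using separates_aux_V_image_Some[OF sep] .
  have no_exit:
    "\<not> (restr (aux_E V E M (nbr_mon V E M (M - {m}))) (aux_V V M - Some ` Y))\<^sup>*\<^sup>* (Some v) None"
    using sep Y(1) by (simp add: separates_def Gm_E_def)
  have "\<forall>p\<in>csp_paths V E M. v \<in> set p \<longrightarrow> set p \<inter> Y \<noteq> {}"
  proof (intro ballI impI)
    fix p assume p: "p \<in> csp_paths V E M" "v \<in> set p"
    have "v \<notin> Y" using Y(2) by blast
    obtain p1 p2 where p_eq: "p = p1 @ v # p2"
      and meets: "set p1 \<inter> M \<subseteq> M - {m} \<Longrightarrow> set p1 \<inter> Y \<noteq> {}"
        "set p2 \<inter> M \<subseteq> M - {m} \<Longrightarrow> set p2 \<inter> Y \<noteq> {}"
      using csp_path_halves_meet_separator[OF ug v \<open>v \<notin> Y\<close> no_exit p] by blast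
    have "distinct p" using p(1) by (simp add: csp_paths_def simple_path_def)
    then have "set p1 \<inter> M \<subseteq> M - {m} \<or> set p2 \<inter> M \<subseteq> M - {m}" using p_eq by auto
    then show "set p \<inter> Y \<noteq> {}" using meets p_eq by auto
  qed
  then have "paths_through (csp_paths V E M) (insert v Y) = paths_through (csp_paths V E M) Y"
    by (rule paths_through_insert_eq)
  moreover have "Y \<subseteq> V - M" "v \<notin> Y" using Y(2) by auto
  ultimately show ?thesis
    using not_k_identifiable_if_indistinguishable[OF ugraph_finite[OF ug] _ v] Y(3) by simp
qed

lemma not_k_identifiable_at_Gstar_separator:
  assumes ug: "ugraph V E" and v: "v \<in> V - M"
    and sep: "separates (aux_V V M) (Gstar_E V E M) (Some v) None X" and "X \<noteq> {}"
  shows "\<not> k_identifiable V E M {v} (card X)"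
proof -
  obtain Y where Y: "X = Some ` Y" "Y \<subseteq> V - M - {v}" "card Y = card X"
    using separates_aux_V_image_Some[OF sep] .
  obtain y0 where y0: "y0 \<in> Y" using \<open>X \<noteq> {}\<close> Y(1) by blast
  have no_exit: "\<not> (restr (aux_E V E M (nbr_mon V E M M)) (aux_V V M - Some ` Y))\<^sup>*\<^sup>* (Some v) None"
    using sep Y(1) by (simp add: separates_def Gstar_E_def)
  have "\<forall>p\<in>csp_paths V E M. v \<in> set p \<longrightarrow> set p \<inter> (Y - {y0}) \<noteq> {}"
  proof (intro ballI impI)
    fix p assume p: "p \<in> csp_paths V E M" "v \<in> set p"
    have "v \<notin> Y" using Y(2) by blast
    obtain p1 p2 where p_eq: "p = p1 @ v # p2"
      and "set p1 \<inter> M \<subseteq> M \<Longrightarrow> set p1 \<inter> Y \<noteq> {}" "set p2 \<inter> M \<subseteq> M \<Longrightarrow> set p2 \<inter> Y \<noteq> {}"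
      using csp_path_halves_meet_separator[OF ug v \<open>v \<notin> Y\<close> no_exit p] by blast
    then obtain y1 y2 where "y1 \<in> set p1 \<inter> Y" "y2 \<in> set p2 \<inter> Y" by blast
    moreover have "distinct p" using p(1) by (simp add: csp_paths_def simple_path_def)
    then have "set p1 \<inter> set p2 = {}" using p_eq by auto
    ultimately have "y1 \<in> set p \<inter> (Y - {y0}) \<or> y2 \<in> set p \<inter> (Y - {y0})" using p_eq by auto
    then show "set p \<inter> (Y - {y0}) \<noteq> {}" by blast
  qed
  then have "paths_through (csp_paths V E M) (insert v (Y - {y0}))
      = paths_through (csp_paths V E M) (Y - {y0})"
    by (rule paths_through_insert_eq)
  moreover have "finite Y" using Y(2) ugraph_finite[OF ug] finite_subset by blast
  then have "Suc (card (Y - {y0})) = card X" using Y(3) card_Suc_Diff1 y0 by metis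
  moreover have "Y - {y0} \<subseteq> V - M" "v \<notin> Y - {y0}" using Y(2) by auto
  ultimately show ?thesis
    using not_k_identifiable_if_indistinguishable[OF ugraph_finite[OF ug] _ v] by simp
qed

(* Walks from Some v to the sink None correspond to walks from v to a monitor whose inner nodes
   are non-monitors outside F. *)
definition exit_digraph ::
  "'a set \<Rightarrow> ('a \<Rightarrow> 'a \<Rightarrow> bool) \<Rightarrow> 'a set \<Rightarrow> 'a set \<Rightarrow> 'a option \<Rightarrow> 'a option \<Rightarrow> bool" where
  "exit_digraph V E M F x y = (case (x, y) of
      (Some a, Some b) \<Rightarrow> E a b \<and> a \<in> V - M - F \<and> (b \<in> V - M - F \<or> b \<in> M)
    | (Some a, None) \<Rightarrow> a \<in> M
    | _ \<Rightarrow> False)"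

(* An edge from a node to the virtual node m' is replaced by the edge to the monitor
   responsible for it. *)
lemma aux_reach_imp_exit_reach:
  assumes "(restr (aux_E V E M (nbr_mon V E M M')) (aux_V V M - Some ` Y))\<^sup>*\<^sup>* (Some v) None"
    and "M' \<subseteq> M" "F \<subseteq> Y"
    and z: "z \<notin> Some ` (V - M - Y)" "z \<notin> Some ` M'" "z \<noteq> None"
  shows "(restr (exit_digraph V E M F) (- {z}))\<^sup>*\<^sup>* (Some v) None"
proof -
  let ?R = "restr (exit_digraph V E M F) (- {z})"
  have "?R\<^sup>*\<^sup>* (Some v) None \<or> (\<exists>b. c = Some b \<and> ?R\<^sup>*\<^sup>* (Some v) (Some b))"
    if "(restr (aux_E V E M (nbr_mon V E M M')) (aux_V V M - Some ` Y))\<^sup>*\<^sup>* (Some v) c" for c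
    using that
  proof (induction rule: rtranclp_induct)
    case (step c d)
    from step.IH show ?case
    proof (elim disjE exE conjE)
      fix b assume c: "c = Some b" and reach_b: "?R\<^sup>*\<^sup>* (Some v) (Some b)"
      have b: "b \<in> V - M - Y" and d: "d \<in> aux_V V M - Some ` Y"
        and edge: "aux_E V E M (nbr_mon V E M M') (Some b) d"
        using step.hyps(2) c by (auto simp: restr_def aux_V_def)
      show ?thesis
      proof (cases d)
        case None
        then obtain m where m: "m \<in> M'" "E b m"
          using edge by (auto simp: aux_E_def nbr_mon_def)
        have "?R (Some b) (Some m)" "?R (Some m) None"
          using b m z assms(2,3) by (auto simp: restr_def exit_digraph_def)
        then show ?thesis using reach_b by (meson rtranclp.rtrancl_into_rtrancl)
      next
        case (Some b')
        then have "b' \<in> V - M - Y" "E b b'" using d edge by (auto simp: aux_V_def aux_E_def)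
        then have "?R (Some b) (Some b')"
          using b assms(3) z by (auto simp: restr_def exit_digraph_def)
        then show ?thesis using reach_b Some by (blast intro: rtranclp.rtrancl_into_rtrancl)
      qed
    qed blast
  qed simp
  then show ?thesis using assms(1) by blast
qed

lemma exit_reach_two_steps:
  assumes "exit_digraph V E M F (Some v) (Some m)" "exit_digraph V E M F (Some m) None"
    "z \<noteq> Some v" "z \<noteq> Some m" "z \<noteq> None"
  shows "(restr (exit_digraph V E M F) (- {z}))\<^sup>*\<^sup>* (Some v) None"
proof -
  have "restr (exit_digraph V E M F) (- {z}) (Some v) (Some m)"
    "restr (exit_digraph V E M F) (- {z}) (Some m) None"
    using assms by (auto simp: restr_def exit_digraph_def)
  then show ?thesis by (meson converse_rtranclp_into_rtranclp r_into_rtranclp)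
qed

lemma exit_reach_avoiding_monitor:
  assumes ug: "ugraph V E" and v: "v \<in> V - M" "v \<notin> F" and F: "F \<subseteq> V - M" and w: "w \<in> M"
    and cut: "card F < cut_card (aux_V V M) (Gm_E V E M w) (Some v) None"
  shows "(restr (exit_digraph V E M F) (- {Some w}))\<^sup>*\<^sup>* (Some v) None"
proof (cases "Gm_E V E M w (Some v) None")
  case True
  then obtain m where "m \<in> M - {w}" "E v m" by (auto simp: Gm_E_def aux_E_def nbr_mon_def)
  then show ?thesis
    using v w by (intro exit_reach_two_steps[where m = m]) (auto simp: exit_digraph_def)
next
  case False
  have "Some ` F \<subseteq> aux_V V M - {Some v, None}" using F v by (auto simp: aux_V_def)
  moreover have "card (Some ` F) < cut_card (aux_V V M) (Gm_E V E M w) (Some v) None"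
    using cut by (simp add: card_image)
  ultimately have "(restr (Gm_E V E M w) (aux_V V M - Some ` F))\<^sup>*\<^sup>* (Some v) None"
    using rtranclp_restr_if_card_less_cut_card[where R = "Gm_E V E M w",
        OF finite_aux_V[OF ugraph_finite[OF ug], of M] False]
    by blast
  then show ?thesis
    unfolding Gm_E_def by (rule aux_reach_imp_exit_reach) (use w in auto)
qed

lemma exit_reach_avoiding_non_monitor:
  assumes ug: "ugraph V E" and v: "v \<in> V - M" "v \<notin> F" and F: "F \<subseteq> V - M"
    and w: "w \<notin> M" "w \<noteq> v"
    and cut: "Suc (card F) < cut_card (aux_V V M) (Gstar_E V E M) (Some v) None"
  shows "(restr (exit_digraph V E M F) (- {Some w}))\<^sup>*\<^sup>* (Some v) None"
proof (cases "Gstar_E V E M (Some v) None")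
  case True
  then obtain m where "m \<in> M" "E v m" by (auto simp: Gstar_E_def aux_E_def nbr_mon_def)
  then show ?thesis
    using v w by (intro exit_reach_two_steps[where m = m]) (auto simp: exit_digraph_def)
next
  case False
  define Y where "Y = F \<union> ({w} \<inter> (V - M))"
  have "card Y \<le> card F + card ({w} \<inter> (V - M))" unfolding Y_def by (rule card_Un_le)
  moreover have "card ({w} \<inter> (V - M)) \<le> 1" by (cases "w \<in> V - M") auto
  ultimately have "card Y \<le> Suc (card F)" by simp
  then have "card (Some ` Y) < cut_card (aux_V V M) (Gstar_E V E M) (Some v) None"
    using cut by (simp add: card_image)
  moreover have "Some ` Y \<subseteq> aux_V V M - {Some v, None}"
    using F v w by (auto simp: aux_V_def Y_def)
  ultimately have "(restr (Gstar_E V E M) (aux_V V M - Some ` Y))\<^sup>*\<^sup>* (Some v) None"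
    using rtranclp_restr_if_card_less_cut_card[where R = "Gstar_E V E M",
        OF finite_aux_V[OF ugraph_finite[OF ug], of M] False]
    by blast
  then show ?thesis
    unfolding Gstar_E_def by (rule aux_reach_imp_exit_reach) (use w in \<open>auto simp: Y_def\<close>)
qed

lemma successively_exit_digraph_to_sink:
  assumes "successively (exit_digraph V E M F) l" "l \<noteq> []" "last l = None" "hd l \<noteq> None"
  shows "\<exists>p. l = map Some p @ [None] \<and> p \<noteq> [] \<and> last p \<in> M \<and> successively E p
    \<and> set (butlast p) \<subseteq> V - M - F"
  using assms
proof (induction l)
  case (Cons x xs)
  obtain a where x: "x = Some a" using Cons.prems(4) by (cases x) auto
  obtain y ys where xs: "xs = y # ys" using Cons.prems(3) x by (cases xs) auto
  have edge: "exit_digraph V E M F x y" and walk: "successively (exit_digraph V E M F) (y # ys)"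
    using Cons.prems(1) xs by auto
  show ?case
  proof (cases y)
    case None
    have "ys = []" using walk None by (cases ys) (auto simp: exit_digraph_def)
    moreover have "a \<in> M" using edge x None by (simp add: exit_digraph_def)
    ultimately show ?thesis using x xs None by (auto intro!: exI[of _ "[a]"])
  next
    case (Some b)
    obtain p where p: "xs = map Some p @ [None]" "p \<noteq> []" "last p \<in> M" "successively E p"
      "set (butlast p) \<subseteq> V - M - F"
      using Cons.IH walk Cons.prems(3) xs Some x by auto
    have "hd p = b" using p(1,2) xs Some by (cases p) auto
    moreover have "E a b" "a \<in> V - M - F" using edge x Some by (auto simp: exit_digraph_def)
    ultimately show ?thesis using p x by (auto simp: successively_Cons intro!: exI[of _ "a # p"])
  qed
qed simp

lemma exit_walk_imp_monitor_walk:
  assumes "simple_walk (exit_digraph V E M F) \<alpha> (Some v) None"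
  obtains p where "\<alpha> = map Some p @ [None]" "simple_walk E p v (last p)" "last p \<in> M"
    "set (butlast p) \<subseteq> V - M - F"
proof -
  obtain p where p: "\<alpha> = map Some p @ [None]" "p \<noteq> []" "last p \<in> M" "successively E p"
    "set (butlast p) \<subseteq> V - M - F"
    using successively_exit_digraph_to_sink[of V E M F \<alpha>] assms by (auto simp: simple_walk_def)
  moreover have "hd p = v" "distinct p"
    using assms p(1,2) by (cases p; auto simp: simple_walk_def distinct_map)+
  ultimately show ?thesis using that by (simp add: simple_walk_def)
qed

lemma simple_walk_set_butlast: "simple_walk R p x y \<Longrightarrow> set p = insert y (set (butlast p))"
  by (cases p rule: rev_cases) (auto simp: simple_walk_def)

lemma monitor_walks_imp_csp_path:
  assumes ug: "ugraph V E" and "M \<subseteq> V" "v \<notin> M" "F \<inter> M = {}"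
    and p: "simple_walk E p v m" "m \<in> M" "set (butlast p) \<subseteq> V - F"
    and q: "simple_walk E q v m'" "m' \<in> M" "set (butlast q) \<subseteq> V - F"
    and meet: "set p \<inter> set q = {v}"
  shows "\<exists>P\<in>csp_paths V E M. v \<in> set P \<and> set P \<inter> F = {}"
proof -
  have "set p = insert m (set (butlast p))" "set q = insert m' (set (butlast q))"
    by (rule simple_walk_set_butlast[OF p(1)], rule simple_walk_set_butlast[OF q(1)])
  then have in_V: "set p \<union> set q \<subseteq> V - F" using p(2,3) q(2,3) assms(2,4) by auto
  have "set (rev p) \<inter> set q = {v}" using meet by simp
  note P = simple_walk_append[OF simple_walk_rev[OF ug p(1)] q(1) this]
  have "m \<noteq> m'" using meet p(1,2) q(1) assms(3) by (auto dest: simple_walk_hd_last_in_set)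
  then have "rev p @ tl q \<in> csp_paths V E M"
    using P in_V p(2) q(2) by (auto simp: csp_paths_def simple_path_def simple_walk_def)
  moreover have "v \<in> set (rev p @ tl q)" "set (rev p @ tl q) \<inter> F = {}"
    using P(2) meet in_V by auto
  ultimately show ?thesis by (intro bexI[of _ "rev p @ tl q"]) simp_all
qed

lemma csp_path_through_avoiding:
  assumes ug: "ugraph V E" and "M \<subseteq> V" "M \<noteq> {}" and v: "v \<in> V - M"
    and F: "F \<subseteq> V - M" "v \<notin> F"
    and cut_star: "Suc (card F) < cut_card (aux_V V M) (Gstar_E V E M) (Some v) None"
    and cut_m: "\<forall>m\<in>M. card F < cut_card (aux_V V M) (Gm_E V E M m) (Some v) None"
  shows "\<exists>P\<in>csp_paths V E M. v \<in> set P \<and> set P \<inter> F = {}"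
proof -
  let ?R = "exit_digraph V E M F"
  have avoid: "(restr ?R (- {z}))\<^sup>*\<^sup>* (Some v) None" if z: "z \<noteq> Some v" "z \<noteq> None" for z
  proof -
    obtain w where w: "z = Some w" using z(2) by blast
    show ?thesis
      using exit_reach_avoiding_monitor[OF ug v F(2,1)]
        exit_reach_avoiding_non_monitor[OF ug v F(2,1)] cut_m cut_star z(1) w
      by (cases "w \<in> M") auto
  qed
  obtain m0 where "m0 \<in> M" using assms(3) by blast
  then have "(restr ?R (- {Some m0}))\<^sup>*\<^sup>* (Some v) None" using avoid[of "Some m0"] v by auto
  moreover have "restr ?R (- {Some m0}) \<le> ?R" by (auto simp: restr_def)
  ultimately have "?R\<^sup>*\<^sup>* (Some v) None" by (metis rtranclp_mono predicate2D)
  then obtain \<alpha> \<gamma> where "simple_walk ?R \<alpha> (Some v) None" "simple_walk ?R \<gamma> (Some v) None"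
    and meet: "set \<alpha> \<inter> set \<gamma> = {Some v, None}"
    using two_internally_disjoint_walks[OF _ _ avoid] by blast
  then obtain p q where p: "\<alpha> = map Some p @ [None]" "simple_walk E p v (last p)" "last p \<in> M"
      "set (butlast p) \<subseteq> V - M - F"
    and q: "\<gamma> = map Some q @ [None]" "simple_walk E q v (last q)" "last q \<in> M"
      "set (butlast q) \<subseteq> V - M - F"
    by (metis exit_walk_imp_monitor_walk)
  have "set p \<inter> set q \<subseteq> {v}"
  proof
    fix x assume "x \<in> set p \<inter> set q"
    then have "Some x \<in> set \<alpha> \<inter> set \<gamma>" using p(1) q(1) by auto
    then show "x \<in> {v}" using meet by auto
  qed
  moreover have "v \<in> set p" "v \<in> set q" using p(2) q(2) by (auto dest: simple_walk_hd_last_in_set)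
  ultimately have "set p \<inter> set q = {v}" by blast
  moreover have "v \<notin> M" "F \<inter> M = {}" "set (butlast p) \<subseteq> V - F" "set (butlast q) \<subseteq> V - F"
    using v F p(4) q(4) by auto
  ultimately show ?thesis
    using monitor_walks_imp_csp_path[OF ug assms(2) _ _ p(2,3) _ q(2,3)] by blast
qed

lemma k_identifiable_0: "finite V \<Longrightarrow> k_identifiable V E M S 0"
  unfolding k_identifiable_def by (metis card_0_eq finite_Diff finite_subset le_zero_eq)

lemma k_identifiable_mono: "k_identifiable V E M S k \<Longrightarrow> j \<le> k \<Longrightarrow> k_identifiable V E M S j"
  unfolding k_identifiable_def by (meson order_trans)

lemma Omega_csp_ge:
  assumes "k \<le> card (V - M)" "k_identifiable V E M {v} k"
  shows "k \<le> Omega_csp V E M v"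
  unfolding Omega_csp_def using assms by (intro Max_ge) auto

lemma Omega_csp_less:
  assumes "finite V" "\<not> k_identifiable V E M {v} k"
  shows "Omega_csp V E M v < k"
proof -
  let ?S = "{k. k \<le> card (V - M) \<and> k_identifiable V E M {v} k}"
  have "Max ?S \<in> ?S" using k_identifiable_0[OF assms(1)] by (intro Max_in) auto
  then show ?thesis
    unfolding Omega_csp_def using assms(2) k_identifiable_mono not_le by blast
qed

lemma k_identifiable_below_cut_cards:
  assumes ug: "ugraph V E" and "M \<subseteq> V" "M \<noteq> {}" and v: "v \<in> V - M"
    and cut_star: "Suc k < cut_card (aux_V V M) (Gstar_E V E M) (Some v) None"
    and cut_m: "\<forall>m\<in>M. k < cut_card (aux_V V M) (Gm_E V E M m) (Some v) None"
  shows "k_identifiable V E M {v} k"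
proof -
  have distinguishes: "paths_through (csp_paths V E M) F \<noteq> paths_through (csp_paths V E M) G"
    if F: "F \<subseteq> V - M" "card F \<le> k" "v \<notin> F" and "v \<in> G" for F G
  proof -
    have "Suc (card F) < cut_card (aux_V V M) (Gstar_E V E M) (Some v) None"
      "\<forall>m\<in>M. card F < cut_card (aux_V V M) (Gm_E V E M m) (Some v) None"
      using cut_star cut_m F(2) by auto
    then obtain P where "P \<in> csp_paths V E M" "v \<in> set P" "set P \<inter> F = {}"
      using csp_path_through_avoiding[OF ug assms(2,3) v F(1,3)] by auto
    then show ?thesis using \<open>v \<in> G\<close> by (auto simp: paths_through_def)
  qed
  show ?thesis
    unfolding k_identifiable_def
  proof (intro allI impI, elim conjE)
    fix F1 F2 assume F: "F1 \<subseteq> V - M" "F2 \<subseteq> V - M" "card F1 \<le> k" "card F2 \<le> k"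
      and "F1 \<inter> {v} \<noteq> F2 \<inter> {v}"
    then consider "v \<in> F1" "v \<notin> F2" | "v \<in> F2" "v \<notin> F1" by auto
    then show "paths_through (csp_paths V E M) F1 \<noteq> paths_through (csp_paths V E M) F2"
    proof cases
      case 1
      then show ?thesis using distinguishes[OF F(2,4)] by metis
    next
      case 2
      then show ?thesis using distinguishes[OF F(1,3)] by metis
    qed
  qed
qed

lemma Gstar_reach_sink_or_node:
  assumes "(restr E V)\<^sup>*\<^sup>* v c" "v \<in> V - M"
  shows "(restr (Gstar_E V E M) (aux_V V M))\<^sup>*\<^sup>* (Some v) None
     \<or> (c \<in> V - M \<and> (restr (Gstar_E V E M) (aux_V V M))\<^sup>*\<^sup>* (Some v) (Some c))"
  using assms(1)
proof (induction rule: rtranclp_induct)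
  case (step c d)
  let ?R = "restr (Gstar_E V E M) (aux_V V M)"
  from step.IH show ?case
  proof (elim disjE conjE)
    assume c: "c \<in> V - M" and reach_c: "?R\<^sup>*\<^sup>* (Some v) (Some c)"
    have "E c d" "d \<in> V" using step.hyps(2) by (auto simp: restr_def)
    show ?thesis
    proof (cases "d \<in> M")
      case True
      then have "?R (Some c) None" using c \<open>E c d\<close>
        by (auto simp: restr_def Gstar_E_def aux_E_def aux_V_def nbr_mon_def)
      then show ?thesis using reach_c by (meson rtranclp.rtrancl_into_rtrancl)
    next
      case False
      then have "?R (Some c) (Some d)" using c \<open>E c d\<close> \<open>d \<in> V\<close>
        by (auto simp: restr_def Gstar_E_def aux_E_def aux_V_def)
      then show ?thesis
        using reach_c False \<open>d \<in> V\<close> by (meson rtranclp.rtrancl_into_rtrancl Diff_iff)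
    qed
  qed blast
qed (use assms(2) in auto)

lemma cut_card_Gstar_pos:
  assumes ug: "ugraph V E" and conn: "connected_graph V E" and "M \<subseteq> V" "M \<noteq> {}"
    and v: "v \<in> V - M"
  shows "0 < cut_card (aux_V V M) (Gstar_E V E M) (Some v) None"
proof (cases "Gstar_E V E M (Some v) None")
  case True
  then show ?thesis using v ugraph_finite[OF ug] card_aux_V_minus_sink[of V M]
    by (auto simp: cut_card_def card_gt_0_iff)
next
  case False
  obtain m where "m \<in> M" using assms(4) by blast
  then have "(restr E V)\<^sup>*\<^sup>* v m" using conn v assms(3) by (auto simp: connected_graph_def)
  then have reach: "(restr (Gstar_E V E M) (aux_V V M))\<^sup>*\<^sup>* (Some v) None"
    using Gstar_reach_sink_or_node[OF _ v] \<open>m \<in> M\<close> by blast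
  have "Some v \<in> aux_V V M" "None \<in> aux_V V M" using v by (auto simp: aux_V_def)
  then obtain X where X: "separates (aux_V V M) (Gstar_E V E M) (Some v) None X"
    "card X = cut_card (aux_V V M) (Gstar_E V E M) (Some v) None"
    by (rule cut_card_attained[where R = "Gstar_E V E M",
          OF finite_aux_V[OF ugraph_finite[OF ug]] _ _ option.distinct(2) False])
  moreover have "X \<noteq> {}" using X reach by (auto simp: separates_def)
  moreover have "finite X"
    using X finite_aux_V[OF ugraph_finite[OF ug]] by (auto simp: separates_def intro: finite_subset)
  ultimately show ?thesis by (metis card_gt_0_iff)
qed

lemma Omega_csp_le_Gm_cut_card:
  assumes ug: "ugraph V E" and v: "v \<in> V - M" and m: "m \<in> M"
    and less: "cut_card (aux_V V M) (Gm_E V E M m) (Some v) None < card (V - M)"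
  shows "Omega_csp V E M v \<le> cut_card (aux_V V M) (Gm_E V E M m) (Some v) None"
proof -
  have "\<not> Gm_E V E M m (Some v) None"
    using less card_aux_V_minus_sink[of V M] by (auto simp: cut_card_def)
  moreover have "Some v \<in> aux_V V M" "None \<in> aux_V V M" using v by (auto simp: aux_V_def)
  ultimately obtain X where "separates (aux_V V M) (Gm_E V E M m) (Some v) None X"
    "card X = cut_card (aux_V V M) (Gm_E V E M m) (Some v) None"
    using cut_card_attained[OF finite_aux_V[OF ugraph_finite[OF ug]]] by blast
  then have "\<not> k_identifiable V E M {v} (Suc (cut_card (aux_V V M) (Gm_E V E M m) (Some v) None))"
    using not_k_identifiable_beyond_Gm_separator[OF ug v m] by metis
  then show ?thesis using Omega_csp_less[OF ugraph_finite[OF ug]] by fastforce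
qed

lemma Omega_csp_less_Gstar_cut_card:
  assumes ug: "ugraph V E" and v: "v \<in> V - M"
    and pos: "0 < cut_card (aux_V V M) (Gstar_E V E M) (Some v) None"
    and less: "cut_card (aux_V V M) (Gstar_E V E M) (Some v) None < card (V - M)"
  shows "Omega_csp V E M v < cut_card (aux_V V M) (Gstar_E V E M) (Some v) None"
proof -
  have "\<not> Gstar_E V E M (Some v) None"
    using less card_aux_V_minus_sink[of V M] by (auto simp: cut_card_def)
  moreover have "Some v \<in> aux_V V M" "None \<in> aux_V V M" using v by (auto simp: aux_V_def)
  ultimately obtain X where "separates (aux_V V M) (Gstar_E V E M) (Some v) None X"
    "card X = cut_card (aux_V V M) (Gstar_E V E M) (Some v) None"
    using cut_card_attained[OF finite_aux_V[OF ugraph_finite[OF ug]]] by blast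
  then have "\<not> k_identifiable V E M {v} (cut_card (aux_V V M) (Gstar_E V E M) (Some v) None)"
    using not_k_identifiable_at_Gstar_separator[OF ug v] pos by (metis card.empty less_irrefl)
  then show ?thesis using Omega_csp_less[OF ugraph_finite[OF ug]] by blast
qed

lemma Omega_csp_ge_below_cut_cards:
  assumes "ugraph V E" "M \<subseteq> V" "M \<noteq> {}" "v \<in> V - M" "k \<le> card (V - M)"
    and "Suc k < cut_card (aux_V V M) (Gstar_E V E M) (Some v) None"
    and "\<forall>m\<in>M. k < cut_card (aux_V V M) (Gm_E V E M m) (Some v) None"
  shows "k \<le> Omega_csp V E M v"
  using assms by (intro Omega_csp_ge k_identifiable_below_cut_cards)

theorem theorem5:
  fixes V :: "'a set" and E :: "'a \<Rightarrow> 'a \<Rightarrow> bool" and M :: "'a set" and v :: 'a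
  assumes "ugraph V E" and "connected_graph V E"
    and "M \<subseteq> V" and "M \<noteq> {}"
    and "v \<in> V - M"
  defines "\<sigma> \<equiv> card (V - M)"
    and "\<delta>star \<equiv> cut_card (aux_V V M) (Gstar_E V E M) (Some v) None"
    and "\<delta>min \<equiv> Min ((\<lambda>m. cut_card (aux_V V M) (Gm_E V E M m) (Some v) None) ` M)"
  defines "\<pi> \<equiv> min (int \<delta>min) (int \<delta>star - 1)"
  assumes "\<pi> \<le> int \<sigma> - 2"
  shows "\<pi> - 1 \<le> int (Omega_csp V E M v) \<and> int (Omega_csp V E M v) \<le> \<pi>"
proof -
  let ?\<delta> = "\<lambda>m. cut_card (aux_V V M) (Gm_E V E M m) (Some v) None"
  have fin: "finite (?\<delta> ` M)" using assms(3) ugraph_finite[OF assms(1)] finite_subset by blast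
  then have \<delta>min_le: "\<forall>m\<in>M. \<delta>min \<le> ?\<delta> m" unfolding \<delta>min_def by simp
  have "\<delta>min \<in> ?\<delta> ` M" using Min_in[OF fin] assms(4) unfolding \<delta>min_def by blast
  then obtain m0 where m0: "m0 \<in> M" "?\<delta> m0 = \<delta>min" by auto
  have "0 < \<delta>star" unfolding \<delta>star_def using cut_card_Gstar_pos[OF assms(1-5)] .
  have "nat (\<pi> - 1) \<le> Omega_csp V E M v" if "1 < \<pi>"
    using Omega_csp_ge_below_cut_cards[OF assms(1,3-5), of "nat (\<pi> - 1)"] \<delta>min_le that assms(10)
    unfolding \<pi>_def \<delta>star_def \<sigma>_def by force
  moreover have "Omega_csp V E M v \<le> \<delta>min" if "\<pi> = int \<delta>min"
    using Omega_csp_le_Gm_cut_card[OF assms(1,5) m0(1)] m0(2) that assms(10) unfolding \<sigma>_def by simp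
  moreover have "Omega_csp V E M v < \<delta>star" if "\<pi> = int \<delta>star - 1"
    using Omega_csp_less_Gstar_cut_card[OF assms(1,5)] \<open>0 < \<delta>star\<close> that assms(10)
    unfolding \<sigma>_def \<delta>star_def by simp
  ultimately show ?thesis unfolding \<pi>_def by linarith
qed

end
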